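(* Fix $1\le s\le d$ with $d/s$ an integer, and $T$ such that $T/2$, $Ts/(2d)$ and $T/(2s)$ are integers. Let $(f,O)\in\mathcal{O}_{\mathtt{blsp},s}$, so $f(x)=\|x-v\|_2^2$ for an $s$-block sparse $v$ and $O$ is built from a random $X\in\{-1,1\}^d$ with independent coordinates and $\mathbb{E}[X]=v$. Consider the following adaptive coordinate descent procedure using $T$ oracle queries, each of whose gradient estimates is observed only through one coordinate (i.e. through an oblivious sampling channel that deterministically selects a coordinate, chosen adaptively): Exploration phase (first $T/2$ queries): for each block $k\in[d/s]$, query the oracle $Ts/(2d)$ times and observe coordinate $(k-1)s+1$ of the gradient estimate, recovering from it the value $X_t((k-1)s+1)$ (possible since the query point is known); set $\hat X(k)$ to be the sum of these $Ts/(2d)$ recovered values. Let $k^*=\arg\max_{k\in[d/s]}|\hat X(k)|$ and $\mathcal{I}=\{(k^*-1)s+1,\dots,k^*s\}$. Exploitation phase (last $T/2$ queries): for each $j\in\mathcal{I}$, query the oracle $T/(2s)$ fresh times observing coordinate $j$, recover the values $X_t(j)$, and set $\hat Y(j)=\frac{2s}{T}\sum X_t(j)$ over these queries; set $\hat Y(j)=0$ for $j\notin\mathcal{I}$. Then the output $\hat Y=(\hat Y(1),\dots,\hat Y(d))$ satisfies \[ \mathbb{E}[f(\hat Y)]\ \le\ \frac{36\,d\ln\frac ds+2s^2}{T}. \]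
   Context: Partition $[d]$ into blocks $\{(k-1)s+1,\dots,ks\}$, $k\in[d/s]$. A vector $v\in\mathbb{R}^d$ is $s$-block sparse if it vanishes outside a single block and all coordinates in that block have the same absolute value, lying in $[0,1]$. $\mathcal{O}_{\mathtt{blsp},s}$ is the set of pairs $(f_v,O_v)$, $v$ $s$-block sparse, where $f_v(x)=\|x-v\|_2^2$ on $\mathcal{X}=[-1,1]^d$ and $O_v$, on query $x$ at time $t$, outputs $2(x-X_t)$, where $X_1,X_2,\dots$ are i.i.d. copies of a random vector $X\in\{-1,1\}^d$ with independent coordinates and $\mathbb{E}[X]=v$. *)

theory Defs
  imports "HOL-Probability.Probability"
begin

text \<open>Coordinates are 0-based: [d] is {0 ..< d}; block k (k < d div s) is {k * s ..< (k+1) * s}.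
  Vectors in R^d are functions nat => real (only coordinates < d matter).\<close>

definition blk :: "nat \<Rightarrow> nat \<Rightarrow> nat set" where
  "blk sz b = {b * sz ..< (b+1) * sz}"

definition block_sparse :: "nat \<Rightarrow> nat \<Rightarrow> (nat \<Rightarrow> real) \<Rightarrow> bool" where
  "block_sparse d s v \<longleftrightarrow>
     (\<exists>k < d div s. \<exists>c::real. 0 \<le> c \<and> c \<le> 1 \<and>
        (\<forall>i. (i \<in> blk s k \<longrightarrow> \<bar>v i\<bar> = c) \<and> (i \<notin> blk s k \<longrightarrow> v i = 0)))"

definition fobj :: "nat \<Rightarrow> (nat \<Rightarrow> real) \<Rightarrow> (nat \<Rightarrow> real) \<Rightarrow> real" where
  "fobj d v x = (\<Sum>i<d. (x i - v i)^2)"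

text \<open>Distribution of the noise: Z(t,i) = X_t(i), all independent, X_t(i) in {-1,1}
  with mean v i (i.e. P(X_t(i)=1) = (1 + v i)/2), for t < T, i < d.\<close>
definition coord_pmf :: "real \<Rightarrow> real pmf" where
  "coord_pmf a = map_pmf (\<lambda>b. if b then 1 else -1) (bernoulli_pmf ((1 + a) / 2))"

definition sample_pmf :: "nat \<Rightarrow> nat \<Rightarrow> (nat \<Rightarrow> real) \<Rightarrow> (nat \<times> nat \<Rightarrow> real) pmf" where
  "sample_pmf d T v = Pi_pmf ({..<T} \<times> {..<d}) 0 (\<lambda>(t,i). coord_pmf (v i))"

text \<open>Oracle O_v at time t on query x: gradient estimate 2(x - X_t); coordinate j observed.\<close>
definition grad_obs :: "(nat \<Rightarrow> real) \<Rightarrow> (nat \<times> nat \<Rightarrow> real) \<Rightarrow> nat \<Rightarrow> nat \<Rightarrow> real" where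
  "grad_obs x Z t j = 2 * (x j - Z (t, j))"

definition recover :: "(nat \<Rightarrow> real) \<Rightarrow> real \<Rightarrow> nat \<Rightarrow> real" where
  "recover x g j = x j - g / 2"

text \<open>Query points q t Z (time t; may depend arbitrarily on the sample, in particular adaptively).\<close>
definition rec_val :: "(nat \<Rightarrow> (nat \<times> nat \<Rightarrow> real) \<Rightarrow> nat \<Rightarrow> real) \<Rightarrow> (nat \<times> nat \<Rightarrow> real) \<Rightarrow> nat \<Rightarrow> nat \<Rightarrow> real" where
  "rec_val q Z t j = recover (q t Z) (grad_obs (q t Z) Z t j) j"

definition Xhat :: "nat \<Rightarrow> nat \<Rightarrow> nat \<Rightarrow> (nat \<Rightarrow> (nat \<times> nat \<Rightarrow> real) \<Rightarrow> nat \<Rightarrow> real) \<Rightarrow> (nat \<times> nat \<Rightarrow> real) \<Rightarrow> nat \<Rightarrow> real" where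
  "Xhat d s T q Z k = (let m = T * s div (2 * d) in
      \<Sum>t\<in>{(k * m) ..< ((k+1) * m)}. rec_val q Z t (k * s))"

definition kstar :: "nat \<Rightarrow> nat \<Rightarrow> nat \<Rightarrow> (nat \<Rightarrow> (nat \<times> nat \<Rightarrow> real) \<Rightarrow> nat \<Rightarrow> real) \<Rightarrow> (nat \<times> nat \<Rightarrow> real) \<Rightarrow> nat" where
  "kstar d s T q Z = (LEAST k. k < d div s \<and>
      (\<forall>k'<d div s. \<bar>Xhat d s T q Z k'\<bar> \<le> \<bar>Xhat d s T q Z k\<bar>))"

definition Yhat :: "nat \<Rightarrow> nat \<Rightarrow> nat \<Rightarrow> (nat \<Rightarrow> (nat \<times> nat \<Rightarrow> real) \<Rightarrow> nat \<Rightarrow> real) \<Rightarrow> (nat \<times> nat \<Rightarrow> real) \<Rightarrow> nat \<Rightarrow> real" where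
  "Yhat d s T q Z j = (let k = kstar d s T q Z; n = T div (2 * s); r = j - k * s in
      if j \<in> blk s k then (2 * real s / real T) *
         (\<Sum>t\<in>{(T div 2 + r * n) ..< (T div 2 + (r+1) * n)}. rec_val q Z t j)
      else 0)"

end

theory Submission
  imports Defs
begin

text \<open>Recovering X_t(j) from an observed gradient coordinate is exact, so the estimator is a
  function of the i.i.d. sample of signs alone, and the two phases read disjoint time ranges, i.e.
  independent halves of the sample. Given the block chosen by exploration, each of its s coordinates
  is an average of n = T/(2s) independent signs with mean v(j), whose mean squared error is at most
  1/n; this costs s/n = 2s^2/T in total, plus ||v||^2 = s c^2 if the block is wrong.
  A wrong block forces some block sum of m = Ts/(2d) samples to deviate from its mean by c m/2.
  Hoeffding's inequality and a union bound over the N = d/s blocks bound this probability by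
  min 1 (2 N exp (-c^2 m/8)), and c^2 m times this is at most 18 ln N; finally
  18 s ln N / m = 36 d ln(d/s) / T.\<close>

lemma set_pmf_coord_pmf: "set_pmf (coord_pmf a) \<subseteq> {-1, 1}"
  unfolding coord_pmf_def by auto

lemma expectation_coord_pmf:
  assumes "\<bar>a\<bar> \<le> 1"
  shows "measure_pmf.expectation (coord_pmf a) f = (1 + a) / 2 * f 1 + (1 - a) / 2 * f (-1)"
proof -
  have "0 \<le> (1 + a) / 2" "(1 + a) / 2 \<le> 1"
    using assms by auto
  then show ?thesis
    unfolding coord_pmf_def by (simp add: mult.commute field_simps)
qed

lemma mean_coord_pmf: "\<bar>a\<bar> \<le> 1 \<Longrightarrow> measure_pmf.expectation (coord_pmf a) (\<lambda>x. x) = a"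
  by (simp add: expectation_coord_pmf field_simps)

lemma variance_coord_pmf:
  "\<bar>a\<bar> \<le> 1 \<Longrightarrow> measure_pmf.expectation (coord_pmf a) (\<lambda>x. (x - a)\<^sup>2) = 1 - a\<^sup>2"
  by (simp add: expectation_coord_pmf field_simps power2_eq_square)

lemma finite_set_Pi_pmf:
  assumes "finite I" "\<And>i. i \<in> I \<Longrightarrow> finite (set_pmf (P i))"
  shows "finite (set_pmf (Pi_pmf I dflt P))"
  using assms by (auto simp: set_Pi_pmf)

lemma expectation_Pi_pmf_component:
  fixes f :: "'a \<Rightarrow> real"
  assumes "finite I" "i \<in> I"
  shows "measure_pmf.expectation (Pi_pmf I dflt P) (\<lambda>g. f (g i)) = measure_pmf.expectation (P i) f"
proof -
  have "P i = map_pmf (\<lambda>g. g i) (Pi_pmf I dflt P)"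
    using assms by (simp add: Pi_pmf_component)
  then show ?thesis
    by simp
qed

lemma indep_vars_Pi_pmf_borel:
  assumes "finite I" "S \<subseteq> I"
  shows "prob_space.indep_vars (measure_pmf (Pi_pmf I dflt P)) (\<lambda>_. borel) (\<lambda>i g. f i (g i) :: real) S"
proof -
  have "prob_space.indep_vars (measure_pmf (Pi_pmf I dflt P)) (\<lambda>_. count_space UNIV) (\<lambda>i g. g i) S"
    by (rule prob_space.indep_vars_subset[OF measure_pmf.prob_space_axioms
          indep_vars_Pi_pmf[OF assms(1)] assms(2)])
  then show ?thesis
    by (rule prob_space.indep_vars_compose2[OF measure_pmf.prob_space_axioms]) auto
qed

lemma expectation_Pi_pmf_sum_square:
  fixes P :: "'i \<Rightarrow> real pmf"
  assumes I: "finite I" and S: "S \<subseteq> I" and fin: "finite (set_pmf (Pi_pmf I dflt P))"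
    and mean: "\<And>i. i \<in> S \<Longrightarrow> measure_pmf.expectation (P i) (\<lambda>x. x) = \<mu> i"
  shows "measure_pmf.expectation (Pi_pmf I dflt P) (\<lambda>g. (\<Sum>i\<in>S. g i - \<mu> i)\<^sup>2)
       = (\<Sum>i\<in>S. measure_pmf.expectation (P i) (\<lambda>x. (x - \<mu> i)\<^sup>2))"
proof -
  let ?M = "Pi_pmf I dflt P"
  let ?E = "measure_pmf.expectation ?M"
  have int: "integrable (measure_pmf ?M) f" for f :: "_ \<Rightarrow> real"
    by (rule integrable_measure_pmf_finite[OF fin])
  have centred: "?E (\<lambda>g. g i - \<mu> i) = 0" if "i \<in> S" for i
  proof -
    have "?E (\<lambda>g. g i) = \<mu> i"
      using expectation_Pi_pmf_component[of I i dflt P "\<lambda>x. x"] mean[OF that] that S I by auto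
    then show ?thesis
      by (simp add: int)
  qed
  have cross: "?E (\<lambda>g. (g i - \<mu> i) * (g j - \<mu> j)) = (if i = j then ?E (\<lambda>g. (g i - \<mu> i)\<^sup>2) else 0)"
    if "i \<in> S" "j \<in> S" for i j
  proof (cases "i = j")
    case False
    have "prob_space.indep_vars (measure_pmf ?M) (\<lambda>_. borel) (\<lambda>k g. g k - \<mu> k) {i, j}"
      by (rule indep_vars_Pi_pmf_borel) (use that S I in auto)
    then have "?E (\<lambda>g. \<Prod>k\<in>{i, j}. g k - \<mu> k) = (\<Prod>k\<in>{i, j}. ?E (\<lambda>g. g k - \<mu> k))"
      by (intro prob_space.indep_vars_lebesgue_integral[OF measure_pmf.prob_space_axioms]) (auto intro: int)
    then show ?thesis
      using False centred[OF that(1)] by simp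
  qed (simp add: power2_eq_square)
  have "?E (\<lambda>g. (\<Sum>i\<in>S. g i - \<mu> i)\<^sup>2) = (\<Sum>i\<in>S. \<Sum>j\<in>S. ?E (\<lambda>g. (g i - \<mu> i) * (g j - \<mu> j)))"
    by (simp add: power2_eq_square sum_product int)
  also have "\<dots> = (\<Sum>i\<in>S. ?E (\<lambda>g. (g i - \<mu> i)\<^sup>2))"
    using finite_subset[OF S I] by (simp add: cross cong: sum.cong)
  also have "\<dots> = (\<Sum>i\<in>S. measure_pmf.expectation (P i) (\<lambda>x. (x - \<mu> i)\<^sup>2))"
    using S I by (intro sum.cong refl expectation_Pi_pmf_component) auto
  finally show ?thesis .
qed

lemma Hoeffding_ineq_Pi_pmf:
  fixes P :: "'i \<Rightarrow> real pmf"
  assumes I: "finite I" and S: "S \<subseteq> I" "S \<noteq> {}" and eps: "0 \<le> \<epsilon>"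
    and range: "\<And>i. i \<in> S \<Longrightarrow> set_pmf (P i) \<subseteq> {-1..1}"
    and mean: "\<And>i. i \<in> S \<Longrightarrow> measure_pmf.expectation (P i) (\<lambda>x. x) = w"
  shows "measure_pmf.prob (Pi_pmf I dflt P) {g. \<epsilon> \<le> \<bar>(\<Sum>i\<in>S. g i) - real (card S) * w\<bar>}
           \<le> 2 * exp (- \<epsilon>\<^sup>2 / (2 * real (card S)))"
proof -
  let ?M = "Pi_pmf I dflt P"
  have fin_S: "finite S"
    using finite_subset[OF S(1) I] .
  interpret Hoeffding_ineq "measure_pmf ?M" S "\<lambda>i g. g i" "\<lambda>_. -1" "\<lambda>_. 1" "real (card S) * w"
  proof unfold_locales
    show "prob_space.indep_vars (measure_pmf ?M) (\<lambda>_. borel) (\<lambda>i g. g i) S"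
      using indep_vars_Pi_pmf_borel[OF I S(1), of dflt P "\<lambda>_ x. x"] by simp
    show "AE g in measure_pmf ?M. g i \<in> {-1..1}" if "i \<in> S" for i
    proof (rule AE_pmfI)
      fix g
      assume "g \<in> set_pmf ?M"
      then have "g i \<in> set_pmf (P i)"
        using that S I by (auto simp: set_Pi_pmf PiE_dflt_def)
      then show "g i \<in> {-1..1}"
        using range[OF that] by auto
    qed
    have "measure_pmf.expectation ?M (\<lambda>g. g i) = w" if "i \<in> S" for i
      using expectation_Pi_pmf_component[of I i dflt P "\<lambda>x. x"] mean[OF that] that S I by auto
    then show "real (card S) * w \<equiv> (\<Sum>i\<in>S. measure_pmf.expectation ?M (\<lambda>g. g i))"
      by simp
  qed (fact fin_S)
  have "0 < (\<Sum>i\<in>S. (1 - (-1::real))\<^sup>2)"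
    using fin_S S(2) by (simp add: card_gt_0_iff)
  from Hoeffding_ineq_abs_ge[OF eps this] show ?thesis
    by simp
qed

lemma expectation_Pi_pmf_mean_square_error:
  fixes P :: "'i \<Rightarrow> real pmf"
  assumes I: "finite I" and S: "S \<subseteq> I" "S \<noteq> {}" and fin: "finite (set_pmf (Pi_pmf I dflt P))"
    and mean: "\<And>i. i \<in> S \<Longrightarrow> measure_pmf.expectation (P i) (\<lambda>x. x) = w"
    and var: "\<And>i. i \<in> S \<Longrightarrow> measure_pmf.expectation (P i) (\<lambda>x. (x - w)\<^sup>2) \<le> \<sigma>\<^sup>2"
  shows "measure_pmf.expectation (Pi_pmf I dflt P) (\<lambda>g. ((\<Sum>i\<in>S. g i) / card S - w)\<^sup>2)
           \<le> \<sigma>\<^sup>2 / card S"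
proof -
  let ?n = "real (card S)"
  have n: "?n > 0"
    using finite_subset[OF S(1) I] S(2) by (simp add: card_gt_0_iff)
  have "((\<Sum>i\<in>S. g i) / ?n - w)\<^sup>2 = (\<Sum>i\<in>S. g i - w)\<^sup>2 / ?n\<^sup>2" for g :: "'i \<Rightarrow> real"
    using n by (simp add: sum_subtractf field_simps)
  then have "measure_pmf.expectation (Pi_pmf I dflt P) (\<lambda>g. ((\<Sum>i\<in>S. g i) / ?n - w)\<^sup>2)
      = measure_pmf.expectation (Pi_pmf I dflt P) (\<lambda>g. (\<Sum>i\<in>S. g i - w)\<^sup>2) / ?n\<^sup>2"
    by simp
  also have "\<dots> = (\<Sum>i\<in>S. measure_pmf.expectation (P i) (\<lambda>x. (x - w)\<^sup>2)) / ?n\<^sup>2"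
    by (subst expectation_Pi_pmf_sum_square[OF I S(1) fin, of "\<lambda>_. w"]) (use mean in auto)
  also have "\<dots> \<le> (\<Sum>i\<in>S. \<sigma>\<^sup>2) / ?n\<^sup>2"
    by (intro divide_right_mono sum_mono var) auto
  also have "\<dots> = \<sigma>\<^sup>2 / ?n"
    using n by (simp add: power2_eq_square)
  finally show ?thesis .
qed

lemma expectation_pair_pmf:
  fixes F :: "'a \<times> 'b \<Rightarrow> real"
  assumes p: "finite (set_pmf p)" and q: "finite (set_pmf q)"
  shows "measure_pmf.expectation (pair_pmf p q) F
       = measure_pmf.expectation p (\<lambda>a. measure_pmf.expectation q (\<lambda>b. F (a, b)))"
proof -
  have "measure_pmf.expectation (pair_pmf p q) F
      = (\<Sum>x\<in>set_pmf p \<times> set_pmf q. pmf (pair_pmf p q) x * F x)"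
    using integral_measure_pmf[of "set_pmf p \<times> set_pmf q" "pair_pmf p q" F] p q by auto
  also have "\<dots> = (\<Sum>a\<in>set_pmf p. pmf p a * (\<Sum>b\<in>set_pmf q. pmf q b * F (a, b)))"
    by (simp add: sum.cartesian_product sum_distrib_left)
       (intro sum.cong refl, auto simp: pmf_pair mult.assoc)
  also have "\<dots> = measure_pmf.expectation p (\<lambda>a. measure_pmf.expectation q (\<lambda>b. F (a, b)))"
    using p q by (simp add: integral_measure_pmf[of "set_pmf _"])
  finally show ?thesis .
qed

lemma exp_tail_bound:
  fixes N x :: real
  assumes N: "2 \<le> N" and x: "0 \<le> x"
  shows "x * min 1 (2 * N * exp (- x / 8)) \<le> 18 * ln N"
proof (cases "x \<le> 18 * ln N")
  case True
  have "x * min 1 (2 * N * exp (- x / 8)) \<le> x * 1"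
    using x by (intro mult_left_mono) auto
  then show ?thesis
    using True by linarith
next
  case False
  have ln_N: "2 / 3 \<le> ln N"
    using ln2_ge_two_thirds ln_le_cancel_iff[of 2 N] N by linarith
  have x_pos: "0 < x"
    using False ln_N by linarith
  \<comment> \<open>Split x/8 = x/18 + 5x/72: the first part absorbs N, the second uses exp y \<ge> e * y \<ge> 5/2 * y.\<close>
  have "N = exp (ln N)"
    using N by simp
  also have "\<dots> \<le> exp (x / 18)"
    using False by simp
  finally have "N \<le> exp (x / 18)" .
  moreover have "5 / 2 * (5 * x / 72) \<le> exp (5 * x / 72)"
  proof -
    have "5 / 2 \<le> exp (1::real)"
      using exp_lower_Taylor_quadratic[of 1] by simp
    moreover have "5 * x / 72 \<le> exp (5 * x / 72 - 1)"
      using exp_ge_add_one_self[of "5 * x / 72 - 1"] by simp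
    ultimately have "5 / 2 * (5 * x / 72) \<le> exp 1 * exp (5 * x / 72 - 1)"
      using x_pos by (intro mult_mono) auto
    then show ?thesis
      by (simp flip: exp_add)
  qed
  ultimately have "N * (25 * x / 144) \<le> exp (x / 18) * exp (5 * x / 72)"
    using N x_pos by (intro mult_mono) auto
  also have "\<dots> = exp (x / 8)"
    by (simp flip: exp_add)
  finally have big: "N * (25 * x / 144) \<le> exp (x / 8)" .
  have "x * min 1 (2 * N * exp (- x / 8)) \<le> x * (2 * N * exp (- x / 8))"
    using x by (intro mult_left_mono) auto
  also have "\<dots> = 2 * N * x / exp (x / 8)"
    by (simp add: exp_minus field_simps)
  also have "\<dots> \<le> 2 * N * x / (N * (25 * x / 144))"
    using big N x_pos by (intro divide_left_mono) auto
  also have "\<dots> \<le> 12"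
    using N x_pos by (simp add: field_simps)
  finally show ?thesis
    using ln_N by linarith
qed

lemma Least_arg_max:
  fixes a :: "nat \<Rightarrow> 'a :: linorder"
  assumes "0 < N"
  defines "k \<equiv> LEAST k. k < N \<and> (\<forall>k'<N. a k' \<le> a k)"
  shows "k < N" and "\<And>k'. k' < N \<Longrightarrow> a k' \<le> a k"
proof -
  have "Max (a ` {..<N}) \<in> a ` {..<N}"
    using assms(1) by (intro Max_in) auto
  then obtain k1 where "k1 < N" "a k1 = Max (a ` {..<N})"
    by auto
  then have "k1 < N \<and> (\<forall>k'<N. a k' \<le> a k1)"
    by simp
  then have "k < N \<and> (\<forall>k'<N. a k' \<le> a k)"
    unfolding k_def by (rule LeastI)
  then show "k < N" "\<And>k'. k' < N \<Longrightarrow> a k' \<le> a k"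
    by auto
qed

lemma arg_max_abs_deviation:
  fixes a \<mu> :: "nat \<Rightarrow> real"
  assumes "k \<noteq> k0" "\<bar>a k0\<bar> \<le> \<bar>a k\<bar>" "\<mu> k = 0" "\<bar>\<mu> k0\<bar> = 2 * e"
  shows "e \<le> \<bar>a k0 - \<mu> k0\<bar> \<or> e \<le> \<bar>a k - \<mu> k\<bar>"
  using assms by linarith

lemma rec_val_eq [simp]: "rec_val q Z t j = Z (t, j)"
  unfolding rec_val_def recover_def grad_obs_def by (simp add: field_simps)

lemma card_blk [simp]: "card (blk s k) = s"
  by (simp add: blk_def)

lemma mult_mem_blk_iff:
  assumes "0 < s"
  shows "k * s \<in> blk s k' \<longleftrightarrow> k = k'"
proof
  assume "k * s \<in> blk s k'"
  then have "k' * s \<le> k * s" "k * s < (k' + 1) * s"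
    by (auto simp: blk_def)
  then have "k' \<le> k" "k < k' + 1"
    using assms mult_le_cancel2 mult_less_cancel2[of k s "k' + 1"] by auto
  then show "k = k'"
    by simp
qed (use assms in \<open>simp add: blk_def\<close>)

lemma blk_subset_lessThan:
  assumes "k < N"
  shows "blk s k \<subseteq> {..<N * s}"
proof
  fix j
  assume "j \<in> blk s k"
  then have "j < (k + 1) * s"
    by (simp add: blk_def)
  also have "\<dots> \<le> N * s"
    using assms by (intro mult_right_mono) auto
  finally show "j \<in> {..<N * s}"
    by simp
qed

lemma finite_set_Pi_pmf_coord:
  "finite I \<Longrightarrow> finite (set_pmf (Pi_pmf I dflt (\<lambda>(t, i). coord_pmf (w i))))"
  by (intro finite_set_Pi_pmf) (auto intro: finite_subset[OF set_pmf_coord_pmf])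

locale block_sparse_instance =
  fixes d s T :: nat and v :: "nat \<Rightarrow> real" and k0 :: nat and c :: real
    and N m n h :: nat
  defines "N \<equiv> d div s" and "m \<equiv> T * s div (2 * d)" and "n \<equiv> T div (2 * s)" and "h \<equiv> T div 2"
  assumes s_pos: "0 < s" and s_dvd_d: "s dvd d" and T_pos: "0 < T" and even_T: "2 dvd T"
    and explore_dvd: "2 * d dvd T * s" and exploit_dvd: "2 * s dvd T"
    and k0_less_N: "k0 < N" and c_nonneg: "0 \<le> c" and c_le_1: "c \<le> 1"
    and v_on_blk: "\<And>i. i \<in> blk s k0 \<Longrightarrow> \<bar>v i\<bar> = c"
    and v_off_blk: "\<And>i. i \<notin> blk s k0 \<Longrightarrow> v i = 0"
begin

lemma d_eq: "d = N * s"
  using s_dvd_d by (simp add: N_def)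

lemma T_eq: "T = 2 * h"
  using even_T by (simp add: h_def)

lemma h_eq_exploit: "h = s * n"
  using exploit_dvd T_eq s_pos by (auto simp: n_def elim!: dvdE)

lemma h_eq_explore: "h = N * m"
proof -
  obtain r where r: "T * s = 2 * d * r"
    using explore_dvd by (elim dvdE)
  then have "m = r"
    using T_pos s_pos by (cases "d = 0") (simp_all add: m_def)
  moreover have "2 * h * s = 2 * (N * r) * s"
    using r T_eq d_eq by (simp add: algebra_simps)
  ultimately show ?thesis
    using s_pos by simp
qed

lemma N_pos: "0 < N" and m_pos: "0 < m"
  using T_pos by (simp_all add: T_eq h_eq_explore)

lemma n_pos: "0 < n"
  using T_pos by (simp add: T_eq h_eq_exploit)

lemma blk_subset_d: "k < N \<Longrightarrow> blk s k \<subseteq> {..<d}"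
  using blk_subset_lessThan[of k N s] by (simp add: d_eq[symmetric])

lemma abs_v_le_1: "\<bar>v i\<bar> \<le> 1"
  using v_on_blk v_off_blk c_le_1 by (cases "i \<in> blk s k0") auto

lemma sum_sq_v_off_blk:
  assumes "k < N"
  shows "(\<Sum>j\<in>{..<d} - blk s k. (v j)\<^sup>2) \<le> s * c\<^sup>2 * of_bool (k \<noteq> k0)"
proof (cases "k = k0")
  case True
  then show ?thesis
    using v_off_blk by simp
next
  case False
  have "(\<Sum>j\<in>{..<d} - blk s k. (v j)\<^sup>2) \<le> (\<Sum>j<d. (v j)\<^sup>2)"
    by (intro sum_mono2) simp_all
  also have "\<dots> = (\<Sum>j\<in>blk s k0. (v j)\<^sup>2)"
    using blk_subset_d[OF k0_less_N] by (intro sum.mono_neutral_right) (auto simp: v_off_blk)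
  also have "\<dots> = s * c\<^sup>2"
    by (simp add: power2_abs[symmetric, of "v _"] v_on_blk cong: sum.cong)
  finally show ?thesis
    using False by simp
qed

definition explore_pmf :: "(nat \<times> nat \<Rightarrow> real) pmf" where
  "explore_pmf = Pi_pmf ({..<h} \<times> {..<d}) 0 (\<lambda>(t, i). coord_pmf (v i))"

definition exploit_pmf :: "(nat \<times> nat \<Rightarrow> real) pmf" where
  "exploit_pmf = Pi_pmf ({h..<T} \<times> {..<d}) 0 (\<lambda>(t, i). coord_pmf (v i))"

lemma finite_set_explore_pmf: "finite (set_pmf explore_pmf)"
  unfolding explore_pmf_def by (rule finite_set_Pi_pmf_coord) simp

lemma finite_set_exploit_pmf: "finite (set_pmf exploit_pmf)"
  unfolding exploit_pmf_def by (rule finite_set_Pi_pmf_coord) simp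

definition merge_phases :: "(nat \<times> nat \<Rightarrow> real) \<Rightarrow> (nat \<times> nat \<Rightarrow> real) \<Rightarrow> nat \<times> nat \<Rightarrow> real" where
  "merge_phases f g x = (if x \<in> {..<h} \<times> {..<d} then f x else g x)"

lemma sample_pmf_eq_merge:
  "sample_pmf d T v = map_pmf (\<lambda>(f, g). merge_phases f g) (pair_pmf explore_pmf exploit_pmf)"
proof -
  have "{..<T} \<times> {..<d} = {..<h} \<times> {..<d} \<union> {h..<T} \<times> {..<d}"
    using T_eq by auto
  then have "sample_pmf d T v = Pi_pmf ({..<h} \<times> {..<d} \<union> {h..<T} \<times> {..<d}) 0 (\<lambda>(t, i). coord_pmf (v i))"
    by (simp add: sample_pmf_def)
  also have "\<dots> = map_pmf (\<lambda>(f, g). merge_phases f g) (pair_pmf explore_pmf exploit_pmf)"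
    unfolding explore_pmf_def exploit_pmf_def merge_phases_def by (rule Pi_pmf_union) auto
  finally show ?thesis .
qed

definition block_sum :: "(nat \<times> nat \<Rightarrow> real) \<Rightarrow> nat \<Rightarrow> real" where
  "block_sum f k = (\<Sum>t\<in>{k * m..<(k + 1) * m}. f (t, k * s))"

definition best_block :: "(nat \<times> nat \<Rightarrow> real) \<Rightarrow> nat" where
  "best_block f = (LEAST k. k < N \<and> (\<forall>k'<N. \<bar>block_sum f k'\<bar> \<le> \<bar>block_sum f k\<bar>))"

lemma best_block_less: "best_block f < N"
  and best_block_max: "k < N \<Longrightarrow> \<bar>block_sum f k\<bar> \<le> \<bar>block_sum f (best_block f)\<bar>"
  unfolding best_block_def using Least_arg_max[OF N_pos, where a = "\<lambda>k. \<bar>block_sum f k\<bar>"] by blast+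

definition exploit_estimate :: "nat \<Rightarrow> (nat \<times> nat \<Rightarrow> real) \<Rightarrow> nat \<Rightarrow> real" where
  "exploit_estimate k g j = (if j \<in> blk s k then
     (\<Sum>t\<in>{h + (j - k * s) * n..<h + (j - k * s + 1) * n}. g (t, j)) / n else 0)"

lemma Xhat_merge: "k < N \<Longrightarrow> Xhat d s T q (merge_phases f g) k = block_sum f k"
  unfolding Xhat_def block_sum_def Let_def m_def[symmetric]
proof (intro sum.cong refl)
  fix t
  assume "k < N" "t \<in> {k * m..<(k + 1) * m}"
  moreover have "(k + 1) * m \<le> N * m"
    using \<open>k < N\<close> by (intro mult_right_mono) auto
  moreover have "k * s < d"
    using blk_subset_d[OF \<open>k < N\<close>] mult_mem_blk_iff[OF s_pos] by blast
  ultimately show "rec_val q (merge_phases f g) t (k * s) = f (t, k * s)"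
    using h_eq_explore by (simp add: merge_phases_def)
qed

lemma kstar_merge: "kstar d s T q (merge_phases f g) = best_block f"
  unfolding kstar_def best_block_def N_def[symmetric]
  by (intro arg_cong[where f = Least] ext) (simp add: Xhat_merge cong: conj_cong)

lemma Yhat_merge: "Yhat d s T q (merge_phases f g) = exploit_estimate (best_block f) g"
proof
  fix j
  let ?k = "best_block f"
  have scale: "2 * real s / real T = 1 / real n"
    using T_eq h_eq_exploit s_pos n_pos by (simp add: field_simps)
  have "(\<Sum>t\<in>{h + (j - ?k * s) * n..<h + (j - ?k * s + 1) * n}. merge_phases f g (t, j))
      = (\<Sum>t\<in>{h + (j - ?k * s) * n..<h + (j - ?k * s + 1) * n}. g (t, j))"
    by (intro sum.cong) (auto simp: merge_phases_def)
  with scale show "Yhat d s T q (merge_phases f g) j = exploit_estimate ?k g j"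
    unfolding Yhat_def exploit_estimate_def Let_def kstar_merge n_def[symmetric] h_def[symmetric]
    by simp
qed

lemma expectation_exploit_coordinate_error:
  assumes k: "k < N" and j: "j \<in> blk s k"
  shows "measure_pmf.expectation exploit_pmf (\<lambda>g. (exploit_estimate k g j - v j)\<^sup>2) \<le> 1 / n"
proof -
  define S where "S = (\<lambda>t. (t, j)) ` {h + (j - k * s) * n..<h + (j - k * s + 1) * n}"
  have card_S: "card S = n"
    unfolding S_def by (subst card_image) (auto simp: inj_on_def)
  have "h + (j - k * s + 1) * n \<le> h + s * n"
    using j by (intro add_left_mono mult_right_mono) (auto simp: blk_def)
  then have S_sub: "S \<subseteq> {h..<T} \<times> {..<d}"
    using blk_subset_d[OF k] j T_eq h_eq_exploit by (auto simp: S_def)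
  have "exploit_estimate k g j = (\<Sum>x\<in>S. g x) / card S" for g
    using j card_S unfolding exploit_estimate_def S_def by (subst sum.reindex) (auto simp: inj_on_def)
  moreover have "measure_pmf.expectation exploit_pmf (\<lambda>g. ((\<Sum>x\<in>S. g x) / card S - v j)\<^sup>2)
      \<le> 1\<^sup>2 / card S"
    unfolding exploit_pmf_def
  proof (rule expectation_Pi_pmf_mean_square_error)
    show "S \<noteq> {}"
      using card_S n_pos by auto
    show "finite (set_pmf (Pi_pmf ({h..<T} \<times> {..<d}) 0 (\<lambda>(t, i). coord_pmf (v i))))"
      using finite_set_exploit_pmf by (simp add: exploit_pmf_def)
    show "measure_pmf.expectation ((\<lambda>(t, i). coord_pmf (v i)) x) (\<lambda>y. y) = v j" if "x \<in> S" for x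
      using that abs_v_le_1 by (auto simp: S_def mean_coord_pmf)
    show "measure_pmf.expectation ((\<lambda>(t, i). coord_pmf (v i)) x) (\<lambda>y. (y - v j)\<^sup>2) \<le> 1\<^sup>2"
      if "x \<in> S" for x
      using that abs_v_le_1 by (auto simp: S_def variance_coord_pmf)
  qed (use S_sub in auto)
  ultimately show ?thesis
    using card_S by simp
qed

lemma expected_exploit_error:
  assumes k: "k < N"
  shows "measure_pmf.expectation exploit_pmf (\<lambda>g. fobj d v (exploit_estimate k g))
           \<le> s / n + s * c\<^sup>2 * of_bool (k \<noteq> k0)"
proof -
  let ?err = "\<lambda>j. measure_pmf.expectation exploit_pmf (\<lambda>g. (exploit_estimate k g j - v j)\<^sup>2)"
  have "measure_pmf.expectation exploit_pmf (\<lambda>g. fobj d v (exploit_estimate k g)) = (\<Sum>j<d. ?err j)"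
    unfolding fobj_def by (intro Bochner_Integration.integral_sum integrable_measure_pmf_finite finite_set_exploit_pmf)
  also have "\<dots> = (\<Sum>j\<in>{..<d} - blk s k. ?err j) + (\<Sum>j\<in>blk s k. ?err j)"
    using blk_subset_d[OF k] by (intro sum.subset_diff) auto
  also have "(\<Sum>j\<in>{..<d} - blk s k. ?err j) = (\<Sum>j\<in>{..<d} - blk s k. (v j)\<^sup>2)"
    by (intro sum.cong refl) (simp add: exploit_estimate_def)
  also have "(\<Sum>j\<in>blk s k. ?err j) \<le> (\<Sum>j\<in>blk s k. 1 / n)"
    by (intro sum_mono expectation_exploit_coordinate_error k)
  also have "\<dots> = s / n"
    by simp
  finally show ?thesis
    using sum_sq_v_off_blk[OF k] by linarith
qed

lemma prob_block_sum_deviation: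
  assumes k: "k < N"
  shows "measure_pmf.prob explore_pmf {f. c * m / 2 \<le> \<bar>block_sum f k - m * v (k * s)\<bar>}
           \<le> 2 * exp (- (c\<^sup>2 * m) / 8)"
proof -
  define S where "S = (\<lambda>t. (t, k * s)) ` {k * m..<(k + 1) * m}"
  have card_S: "card S = m"
    unfolding S_def by (subst card_image) (auto simp: inj_on_def)
  have "(k + 1) * m \<le> N * m"
    using k by (intro mult_right_mono) auto
  moreover have "k * s < d"
    using blk_subset_d[OF k] mult_mem_blk_iff[OF s_pos] by blast
  ultimately have S_sub: "S \<subseteq> {..<h} \<times> {..<d}"
    using h_eq_explore by (auto simp: S_def)
  have block_sum_eq: "block_sum f k = (\<Sum>x\<in>S. f x)" for f
    unfolding block_sum_def S_def by (subst sum.reindex) (auto simp: inj_on_def)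
  have exponent: "- (c * m / 2)\<^sup>2 / (2 * real m) = - (c\<^sup>2 * m) / 8"
    using m_pos by (simp add: field_simps power2_eq_square)
  have "measure_pmf.prob explore_pmf
      {f. c * m / 2 \<le> \<bar>(\<Sum>x\<in>S. f x) - real (card S) * v (k * s)\<bar>}
      \<le> 2 * exp (- (c * m / 2)\<^sup>2 / (2 * real (card S)))"
    unfolding explore_pmf_def
  proof (rule Hoeffding_ineq_Pi_pmf)
    show "S \<noteq> {}"
      using card_S m_pos by auto
    show "set_pmf ((\<lambda>(t, i). coord_pmf (v i)) x) \<subseteq> {-1..1}" for x
      using set_pmf_coord_pmf[of "v (snd x)"] by (auto simp: case_prod_unfold)
    show "measure_pmf.expectation ((\<lambda>(t, i). coord_pmf (v i)) x) (\<lambda>y. y) = v (k * s)" if "x \<in> S" for x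
      using that abs_v_le_1 by (auto simp: S_def mean_coord_pmf)
  qed (use S_sub c_nonneg in auto)
  then show ?thesis
    unfolding exponent card_S block_sum_eq .
qed

lemma best_block_ne_k0_subset:
  "{f. best_block f \<noteq> k0} \<subseteq> (\<Union>k<N. {f. c * m / 2 \<le> \<bar>block_sum f k - m * v (k * s)\<bar>})"
proof
  fix f
  assume "f \<in> {f. best_block f \<noteq> k0}"
  then have wrong: "best_block f \<noteq> k0"
    by simp
  have "v (best_block f * s) = 0"
    using wrong mult_mem_blk_iff[OF s_pos] v_off_blk by blast
  moreover have "\<bar>v (k0 * s)\<bar> = c"
    using mult_mem_blk_iff[OF s_pos] v_on_blk by blast
  ultimately have "c * m / 2 \<le> \<bar>block_sum f k0 - m * v (k0 * s)\<bar> \<or>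
      c * m / 2 \<le> \<bar>block_sum f (best_block f) - m * v (best_block f * s)\<bar>"
    using best_block_max[OF k0_less_N, of f]
    by (intro arg_max_abs_deviation[OF wrong]) (auto simp: abs_mult)
  then show "f \<in> (\<Union>k<N. {f. c * m / 2 \<le> \<bar>block_sum f k - m * v (k * s)\<bar>})"
    using k0_less_N best_block_less by blast
qed

lemma prob_best_block_ne_k0:
  "c\<^sup>2 * m * measure_pmf.prob explore_pmf {f. best_block f \<noteq> k0} \<le> 18 * ln N"
proof (cases "N = 1")
  case True
  then have "{f. best_block f \<noteq> k0} = {}"
    using best_block_less k0_less_N by auto
  then show ?thesis
    using True by simp
next
  case False
  let ?W = "{f. best_block f \<noteq> k0}"
  have "measure_pmf.prob explore_pmf ?W
      \<le> measure_pmf.prob explore_pmf (\<Union>k<N. {f. c * m / 2 \<le> \<bar>block_sum f k - m * v (k * s)\<bar>})"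
    by (intro measure_pmf.finite_measure_mono best_block_ne_k0_subset) auto
  also have "\<dots> \<le> (\<Sum>k<N. measure_pmf.prob explore_pmf {f. c * m / 2 \<le> \<bar>block_sum f k - m * v (k * s)\<bar>})"
    by (rule measure_pmf.finite_measure_subadditive_finite) auto
  also have "\<dots> \<le> (\<Sum>k<N. 2 * exp (- (c\<^sup>2 * m) / 8))"
    by (intro sum_mono prob_block_sum_deviation) auto
  finally have "measure_pmf.prob explore_pmf ?W \<le> min 1 (2 * real N * exp (- (c\<^sup>2 * m) / 8))"
    by simp
  then have "c\<^sup>2 * m * measure_pmf.prob explore_pmf ?W \<le> c\<^sup>2 * m * min 1 (2 * real N * exp (- (c\<^sup>2 * m) / 8))"
    by (intro mult_left_mono) auto
  also have "\<dots> \<le> 18 * ln N"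
    using False N_pos c_nonneg by (intro exp_tail_bound) auto
  finally show ?thesis .
qed

lemma expected_loss_le_misidentification:
  "measure_pmf.expectation (sample_pmf d T v) (\<lambda>Z. fobj d v (Yhat d s T q Z))
     \<le> s / n + s * c\<^sup>2 * measure_pmf.prob explore_pmf {f. best_block f \<noteq> k0}"
proof -
  let ?ne = "{f. best_block f \<noteq> k0}"
  have "measure_pmf.expectation (sample_pmf d T v) (\<lambda>Z. fobj d v (Yhat d s T q Z))
      = measure_pmf.expectation (pair_pmf explore_pmf exploit_pmf)
          (\<lambda>(f, g). fobj d v (exploit_estimate (best_block f) g))"
    by (simp add: sample_pmf_eq_merge case_prod_unfold Yhat_merge)
  also have "\<dots> = measure_pmf.expectation explore_pmf
      (\<lambda>f. measure_pmf.expectation exploit_pmf (\<lambda>g. fobj d v (exploit_estimate (best_block f) g)))"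
    using finite_set_explore_pmf finite_set_exploit_pmf by (simp add: expectation_pair_pmf)
  also have "\<dots> \<le> measure_pmf.expectation explore_pmf (\<lambda>f. s / n + s * c\<^sup>2 * indicator ?ne f)"
    using expected_exploit_error[OF best_block_less]
    by (intro integral_mono integrable_measure_pmf_finite finite_set_explore_pmf) (simp add: indicator_def)
  also have "\<dots> = s / n + s * c\<^sup>2 * measure_pmf.prob explore_pmf ?ne"
    by (subst Bochner_Integration.integral_add) (auto intro: integrable_measure_pmf_finite[OF finite_set_explore_pmf])
  finally show ?thesis .
qed

lemma expected_loss_bound:
  "measure_pmf.expectation (sample_pmf d T v) (\<lambda>Z. fobj d v (Yhat d s T q Z))
     \<le> (36 * real d * ln (real d / real s) + 2 * (real s)\<^sup>2) / real T"
proof -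
  let ?ne = "{f. best_block f \<noteq> k0}"
  have "c\<^sup>2 * measure_pmf.prob explore_pmf ?ne \<le> 18 * ln N / m"
    using prob_best_block_ne_k0 m_pos by (simp add: pos_le_divide_eq mult_ac)
  then have "s * (c\<^sup>2 * measure_pmf.prob explore_pmf ?ne) \<le> s * (18 * ln N / m)"
    by (intro mult_left_mono) auto
  with expected_loss_le_misidentification[of q]
  have "measure_pmf.expectation (sample_pmf d T v) (\<lambda>Z. fobj d v (Yhat d s T q Z))
      \<le> s / n + s * (18 * ln N / m)"
    by (simp add: mult.assoc)
  also have "\<dots> = (36 * real d * ln (real d / real s) + 2 * (real s)\<^sup>2) / real T"
  proof -
    have "real s * real n = real N * real m"
      using h_eq_exploit h_eq_explore by (metis of_nat_mult)
    then show ?thesis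
      using s_pos n_pos m_pos by (simp add: T_eq d_eq h_eq_exploit field_simps power2_eq_square)
  qed
  finally show ?thesis .
qed

end

theorem theorem13:
  fixes d s T :: nat and v :: "nat \<Rightarrow> real"
    and q :: "nat \<Rightarrow> (nat \<times> nat \<Rightarrow> real) \<Rightarrow> nat \<Rightarrow> real"
  assumes "1 \<le> s" and "s \<le> d" and "s dvd d"
    and "T > 0" and "2 dvd T" and "2 * d dvd T * s" and "2 * s dvd T"
    and "block_sparse d s v"
    and "\<And>t Z j. j < d \<Longrightarrow> q t Z j \<in> {-1..1}"
  shows "measure_pmf.expectation (sample_pmf d T v) (\<lambda>Z. fobj d v (Yhat d s T q Z))
           \<le> (36 * real d * ln (real d / real s) + 2 * (real s)^2) / real T"
proof -
  obtain k0 c where "k0 < d div s" "0 \<le> c" "c \<le> 1"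
    and "\<And>i. i \<in> blk s k0 \<Longrightarrow> \<bar>v i\<bar> = c" "\<And>i. i \<notin> blk s k0 \<Longrightarrow> v i = 0"
    using assms(8) unfolding block_sparse_def by blast
  then interpret block_sparse_instance d s T v k0 c "d div s" "T * s div (2 * d)" "T div (2 * s)" "T div 2"
    using assms(1,3-7) by unfold_locales auto
  \<comment> \<open>The query points never matter (\<open>rec_val_eq\<close>).\<close>
  show ?thesis
    by (rule expected_loss_bound)
qed

end
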